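(* Let $\mathcal{A}$ be a pOC with state set $Q$ whose underlying chain $\mathcal{X}$ is strongly connected, with trend $t$, and let $v\in\mathbb{R}^Q$ be any potential. Fix an initial configuration $r(c)$. For runs $w$ of $\mathcal{M}_\mathcal{A}$ starting in $r(c)$, let $p^{(i)}(w)$ and $c^{(i)}(w)$ be the control state and counter value of $w(i)$. Define $$m^{(i)}=\begin{cases}c^{(i)}+v_{p^{(i)}}-i t & \text{if } c^{(j)}\ge1 \text{ for all } 0\le j<i,\\ m^{(i-1)} & \text{otherwise.}\end{cases}$$ Then $m^{(0)},m^{(1)},\dots$ is a martingale.
   Context: A pOC is $\mathcal{A}=(Q,\delta^{=0},\delta^{>0},P^{=0},P^{>0})$ with the following components. - $\delta^{>0}\subseteq Q\times\{-1,0,1\}\times Q$ are the positive rules and $\delta^{=0}\subseteq Q\times\{0,1\}\times Q$ are the zero rules. Every state has both kinds of outgoing rule. - $P^{>0}$ and $P^{=0}$ are positive probability distributions over the outgoing rules of each state. $\mathcal{M}_\mathcal{A}$ is the Markov chain on configurations $p(i)$ with the following transitions: - $p(0)\to q(c)$ with probability $P^{=0}(p,c,q)$; - for $i\ge1$, $p(i)\to q(i+c)$ with probability $P^{>0}(p,c,q)$. $\mathcal{X}$ is the finite Markov chain on $Q$ with transition matrix $A_{pq}=\sum_cP^{>0}(p,c,q)$. $\alpha$ is its invariant distribution, $s_p=\sum_{(p,c,q)\in\delta^{>0}}P^{>0}(p,c,q)c$, and the trend is $t=\alpha s$. A potential is a vector $v$ with $s+Av=v+\mathbf{1}t$. *)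

theory Defs
  imports "HOL-Probability.Probability"
begin

text \<open>
  The rules and their probabilities are encoded by
  functions Ppos, P0 :: 'q => int => 'q => real: (p,c,q) is a positive (resp. zero) rule iff
  Ppos p c q > 0 (resp. P0 p c q > 0). A configuration p(i) is the pair (p, i) :: 'q * nat.
\<close>

definition is_pOC :: "('q::finite \<Rightarrow> int \<Rightarrow> 'q \<Rightarrow> real) \<Rightarrow> ('q \<Rightarrow> int \<Rightarrow> 'q \<Rightarrow> real) \<Rightarrow> bool" where
  "is_pOC P0 Ppos \<longleftrightarrow>
     (\<forall>p c q. 0 \<le> Ppos p c q \<and> 0 \<le> P0 p c q) \<and>
     (\<forall>p c q. Ppos p c q \<noteq> 0 \<longrightarrow> c \<in> {-1, 0, 1}) \<and>
     (\<forall>p c q. P0 p c q \<noteq> 0 \<longrightarrow> c \<in> {0, 1}) \<and>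
     (\<forall>p. (\<Sum>c\<in>{-1,0,1}. \<Sum>q\<in>UNIV. Ppos p c q) = 1) \<and>
     (\<forall>p. (\<Sum>c\<in>{0,1}. \<Sum>q\<in>UNIV. P0 p c q) = 1)"

definition trans_matrix :: "('q::finite \<Rightarrow> int \<Rightarrow> 'q \<Rightarrow> real) \<Rightarrow> 'q \<Rightarrow> 'q \<Rightarrow> real" where
  "trans_matrix Ppos p q = (\<Sum>c\<in>{-1,0,1}. Ppos p c q)"

definition strongly_connected :: "('q::finite \<Rightarrow> 'q \<Rightarrow> real) \<Rightarrow> bool" where
  "strongly_connected A \<longleftrightarrow> (\<forall>p q. (p, q) \<in> {(x, y). A x y > 0}\<^sup>*)"

definition invariant_distribution :: "('q::finite \<Rightarrow> 'q \<Rightarrow> real) \<Rightarrow> ('q \<Rightarrow> real) \<Rightarrow> bool" where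
  "invariant_distribution A \<alpha> \<longleftrightarrow>
     (\<forall>p. 0 \<le> \<alpha> p) \<and> (\<Sum>p\<in>UNIV. \<alpha> p) = 1 \<and> (\<forall>q. (\<Sum>p\<in>UNIV. \<alpha> p * A p q) = \<alpha> q)"

definition drift :: "('q::finite \<Rightarrow> int \<Rightarrow> 'q \<Rightarrow> real) \<Rightarrow> 'q \<Rightarrow> real" where
  "drift Ppos p = (\<Sum>c\<in>{-1,0,1}. \<Sum>q\<in>UNIV. Ppos p c q * real_of_int c)"

definition trend :: "('q::finite \<Rightarrow> int \<Rightarrow> 'q \<Rightarrow> real) \<Rightarrow> ('q \<Rightarrow> real) \<Rightarrow> real" where
  "trend Ppos \<alpha> = (\<Sum>p\<in>UNIV. \<alpha> p * drift Ppos p)"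

definition is_potential :: "('q::finite \<Rightarrow> int \<Rightarrow> 'q \<Rightarrow> real) \<Rightarrow> real \<Rightarrow> ('q \<Rightarrow> real) \<Rightarrow> bool" where
  "is_potential Ppos t v \<longleftrightarrow>
     (\<forall>p. drift Ppos p + (\<Sum>q\<in>UNIV. trans_matrix Ppos p q * v q) = v p + t)"

definition step_prob :: "('q \<Rightarrow> int \<Rightarrow> 'q \<Rightarrow> real) \<Rightarrow> ('q \<Rightarrow> int \<Rightarrow> 'q \<Rightarrow> real)
    \<Rightarrow> 'q \<times> nat \<Rightarrow> 'q \<times> nat \<Rightarrow> real" where
  "step_prob P0 Ppos x y =
     (if snd x = 0 then P0 (fst x) (int (snd y)) (fst y)
      else Ppos (fst x) (int (snd y) - int (snd x)) (fst y))"

definition run_kernel :: "('q \<Rightarrow> int \<Rightarrow> 'q \<Rightarrow> real) \<Rightarrow> ('q \<Rightarrow> int \<Rightarrow> 'q \<Rightarrow> real) \<Rightarrow> 'q \<times> nat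
    \<Rightarrow> nat \<Rightarrow> (nat \<Rightarrow> 'q \<times> nat) \<Rightarrow> ('q \<times> nat) measure" where
  "run_kernel P0 Ppos x0 i \<omega> =
     (if i = 0 then return (count_space UNIV) x0
      else density (count_space UNIV) (\<lambda>y. ennreal (step_prob P0 Ppos (\<omega> (i - 1)) y)))"

definition run_measure :: "('q \<Rightarrow> int \<Rightarrow> 'q \<Rightarrow> real) \<Rightarrow> ('q \<Rightarrow> int \<Rightarrow> 'q \<Rightarrow> real) \<Rightarrow> 'q \<times> nat
    \<Rightarrow> (nat \<Rightarrow> 'q \<times> nat) measure" where
  "run_measure P0 Ppos x0 =
     projective_family.lim UNIV
       (Ionescu_Tulcea.CI (run_kernel P0 Ppos x0) (\<lambda>_. count_space UNIV))
       (\<lambda>_. count_space UNIV)"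

definition run_filtration :: "(nat \<Rightarrow> 'q \<times> nat) measure \<Rightarrow> nat \<Rightarrow> (nat \<Rightarrow> 'q \<times> nat) measure" where
  "run_filtration R n =
     vimage_algebra (space R) (\<lambda>w. restrict w {0..n}) (PiM {0..n} (\<lambda>_. count_space UNIV))"

definition martingale :: "'a measure \<Rightarrow> (nat \<Rightarrow> 'a measure) \<Rightarrow> (nat \<Rightarrow> 'a \<Rightarrow> real) \<Rightarrow> bool" where
  "martingale M F X \<longleftrightarrow>
     (\<forall>n. subalgebra M (F n)) \<and> (\<forall>n. sets (F n) \<subseteq> sets (F (Suc n))) \<and>
     (\<forall>n. X n \<in> borel_measurable (F n)) \<and>
     (\<forall>n. integrable M (X n)) \<and>
     (\<forall>n. AE w in M. real_cond_exp M (F n) (X (Suc n)) w = X n w)"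

fun m_proc :: "('q \<Rightarrow> real) \<Rightarrow> real \<Rightarrow> nat \<Rightarrow> (nat \<Rightarrow> 'q \<times> nat) \<Rightarrow> real" where
  "m_proc v t 0 w = real (snd (w 0)) + v (fst (w 0))"
| "m_proc v t (Suc i) w =
     (if \<forall>j\<le>i. 1 \<le> snd (w j)
      then real (snd (w (Suc i))) + v (fst (w (Suc i))) - real (Suc i) * t
      else m_proc v t i w)"

end

theory Submission
  imports Defs
begin

text \<open>
  As long as the counter has stayed positive, one step from \<open>p(c)\<close> changes
  \<open>c + v\<^sub>p - i t\<close> by \<open>c' - c + v\<^sub>p\<^sub>' - v\<^sub>p - t\<close>, whose expectation under the
  positive rules of \<open>p\<close> is \<open>s\<^sub>p + (A v)\<^sub>p - v\<^sub>p - t = 0\<close> by the potential equation; once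
  the counter has hit zero the process is frozen. So every increment of \<open>m\<close> has
  conditional expectation zero given the past. Increments are bounded and the counter grows
  at most linearly, which gives integrability.
\<close>

lemma measurable_PiM_count_space_finite:
  assumes "finite J" and "f \<in> PiE J (\<lambda>_. UNIV) \<rightarrow> space N"
  shows "f \<in> PiM J (\<lambda>_. count_space (UNIV :: 'a :: countable set)) \<rightarrow>\<^sub>M N"
  using assms by (simp add: count_space_PiM_finite)

lemma borel_measurable_PiM_count_space_finite [measurable]:
  fixes f :: "(nat \<Rightarrow> 'a :: countable) \<Rightarrow> real"
  assumes "finite J"
  shows "f \<in> borel_measurable (PiM J (\<lambda>_. count_space UNIV))"
  using assms by (intro measurable_PiM_count_space_finite) auto

lemma integral_count_space_eq_sum:
  fixes f :: "'a \<Rightarrow> real"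
  assumes "finite S" and "\<And>y. y \<notin> S \<Longrightarrow> f y = 0"
  shows "integral\<^sup>L (count_space UNIV) f = sum f S"
proof -
  have support: "{a \<in> UNIV. f a \<noteq> 0} \<subseteq> S"
    using assms(2) by auto
  then have "integral\<^sup>L (count_space UNIV) f = (\<Sum>a | a \<in> UNIV \<and> f a \<noteq> 0. f a)"
    using assms(1) finite_subset by (intro lebesgue_integral_count_space_finite_support) blast
  also have "\<dots> = sum f S"
    using support assms(1) by (intro sum.mono_neutral_left) auto
  finally show ?thesis .
qed

definition admissible_step :: "'q \<times> nat \<Rightarrow> 'q \<times> nat \<Rightarrow> bool" where
  "admissible_step x y \<longleftrightarrow> snd y \<le> snd x + 1 \<and> (1 \<le> snd x \<longrightarrow> snd x \<le> snd y + 1)"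

text \<open>The guard only serves to make the increment bounded: every admissible step from a
  positive counter satisfies it.\<close>

definition increment :: "('q \<Rightarrow> real) \<Rightarrow> real \<Rightarrow> 'q \<times> nat \<Rightarrow> 'q \<times> nat \<Rightarrow> real" where
  "increment v t x y = (if snd y \<le> snd x + 1 \<and> snd x \<le> snd y + 1
     then real (snd y) - real (snd x) + v (fst y) - v (fst x) - t else 0)"

definition m_increment :: "('q \<Rightarrow> real) \<Rightarrow> real \<Rightarrow> nat \<Rightarrow> (nat \<Rightarrow> 'q \<times> nat) \<Rightarrow> real" where
  "m_increment v t n w = (if \<forall>j\<le>n. 1 \<le> snd (w j) then increment v t (w n) (w (Suc n)) else 0)"

lemma abs_increment_le:
  fixes v :: "'q :: finite \<Rightarrow> real"
  shows "\<bar>increment v t x y\<bar> \<le> 1 + 2 * (\<Sum>q\<in>UNIV. \<bar>v q\<bar>) + \<bar>t\<bar>"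
proof -
  have "\<bar>v (fst y)\<bar> \<le> (\<Sum>q\<in>UNIV. \<bar>v q\<bar>)" "\<bar>v (fst x)\<bar> \<le> (\<Sum>q\<in>UNIV. \<bar>v q\<bar>)"
    by (rule member_le_sum; simp)+
  moreover have "snd y \<le> snd x + 1 \<and> snd x \<le> snd y + 1 \<Longrightarrow> \<bar>real (snd y) - real (snd x)\<bar> \<le> 1"
    by linarith
  ultimately show ?thesis
    unfolding increment_def by (auto simp: abs_le_iff)
qed

lemma m_proc_restrict: "{0..n} \<subseteq> S \<Longrightarrow> m_proc v t n (restrict w S) = m_proc v t n w"
  by (induction n) (auto simp: subset_iff)

lemma m_proc_positive_counter:
  "\<forall>j<n. 1 \<le> snd (w j) \<Longrightarrow> m_proc v t n w = real (snd (w n)) + v (fst (w n)) - real n * t"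
  by (cases n) (auto simp: less_Suc_eq_le)

lemma m_proc_Suc_eq_add_m_increment:
  assumes "admissible_step (w n) (w (Suc n))"
  shows "m_proc v t (Suc n) w = m_proc v t n w + m_increment v t n w"
proof (cases "\<forall>j\<le>n. 1 \<le> snd (w j)")
  case True
  then have "m_proc v t n w = real (snd (w n)) + v (fst (w n)) - real n * t"
    by (intro m_proc_positive_counter) auto
  moreover have "snd (w (Suc n)) \<le> snd (w n) + 1 \<and> snd (w n) \<le> snd (w (Suc n)) + 1"
    using True assms by (simp add: admissible_step_def)
  ultimately show ?thesis
    using True by (simp add: m_increment_def increment_def algebra_simps)
next
  case False
  then have "m_proc v t (Suc n) w = m_proc v t n w" and "m_increment v t n w = 0"
    by (simp_all only: m_proc.simps m_increment_def if_not_P if_False)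
  then show ?thesis
    by simp
qed

lemma abs_m_proc_le:
  fixes v :: "'q :: finite \<Rightarrow> real"
  assumes "\<forall>j\<le>n. snd (w j) \<le> c + j"
  shows "\<bar>m_proc v t n w\<bar> \<le> real c + real n + (\<Sum>q\<in>UNIV. \<bar>v q\<bar>) + real n * \<bar>t\<bar>"
  using assms
proof (induction n)
  case 0
  have "\<bar>v (fst (w 0))\<bar> \<le> (\<Sum>q\<in>UNIV. \<bar>v q\<bar>)"
    by (rule member_le_sum) auto
  with 0 show ?case by simp
next
  case (Suc i)
  then have IH: "\<bar>m_proc v t i w\<bar> \<le> real c + real i + (\<Sum>q\<in>UNIV. \<bar>v q\<bar>) + real i * \<bar>t\<bar>"
    by simp
  have "real (snd (w (Suc i))) \<le> real c + real (Suc i)"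
    using Suc.prems by (metis le_refl of_nat_add of_nat_le_iff)
  moreover have "\<bar>v (fst (w (Suc i)))\<bar> \<le> (\<Sum>q\<in>UNIV. \<bar>v q\<bar>)"
    by (rule member_le_sum) auto
  moreover have "real i * \<bar>t\<bar> \<le> real (Suc i) * \<bar>t\<bar>"
    by (intro mult_right_mono) auto
  moreover have "\<bar>real (Suc i) * t\<bar> = real (Suc i) * \<bar>t\<bar>"
    by (simp add: abs_mult)
  ultimately show ?case
    using IH by (auto simp del: of_nat_Suc)
qed

locale pOC_run =
  fixes P0 Ppos :: "'q :: finite \<Rightarrow> int \<Rightarrow> 'q \<Rightarrow> real" and x0 :: "'q \<times> nat"
  assumes pOC: "is_pOC P0 Ppos"
begin

abbreviation Pstep where "Pstep \<equiv> step_prob P0 Ppos"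

lemma step_prob_nonneg: "0 \<le> Pstep x y"
  using pOC by (auto simp: is_pOC_def step_prob_def)

lemma admissible_step_if_step_prob_nonzero:
  assumes "Pstep x y \<noteq> 0"
  shows "admissible_step x y"
proof (cases "snd x = 0")
  case True
  then have "P0 (fst x) (int (snd y)) (fst y) \<noteq> 0"
    using assms by (simp add: step_prob_def)
  then have "int (snd y) \<in> {0, 1}"
    using pOC unfolding is_pOC_def by blast
  with True show ?thesis
    by (auto simp: admissible_step_def)
next
  case False
  then have "Ppos (fst x) (int (snd y) - int (snd x)) (fst y) \<noteq> 0"
    using assms by (simp add: step_prob_def)
  then have "int (snd y) - int (snd x) \<in> {-1, 0, 1}"
    using pOC unfolding is_pOC_def by blast
  then show ?thesis
    by (auto simp: admissible_step_def)
qed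

definition successors :: "'q \<times> nat \<Rightarrow> ('q \<times> nat) set" where
  "successors x = UNIV \<times> {snd x - 1 .. snd x + 1}"

lemma finite_successors: "finite (successors x)"
  by (simp add: successors_def)

lemma step_prob_eq_0:
  assumes "y \<notin> successors x"
  shows "Pstep x y = 0"
proof (rule ccontr)
  assume "Pstep x y \<noteq> 0"
  then have "snd y \<in> {snd x - 1 .. snd x + 1}"
    by (cases "snd x") (auto dest!: admissible_step_if_step_prob_nonzero simp: admissible_step_def)
  with assms show False
    by (cases y) (auto simp: successors_def)
qed

lemma sum_successors_zero:
  assumes "snd x = 0"
  shows "(\<Sum>y\<in>successors x. Pstep x y * g y)
    = (\<Sum>q\<in>UNIV. P0 (fst x) 0 q * g (q, 0) + P0 (fst x) 1 q * g (q, 1))"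
proof -
  have "(\<Sum>y\<in>successors x. Pstep x y * g y) = (\<Sum>q\<in>UNIV. \<Sum>b\<in>{0..1}. Pstep x (q, b) * g (q, b))"
    using assms by (simp add: successors_def sum.cartesian_product')
  also have "\<dots> = (\<Sum>q\<in>UNIV. P0 (fst x) 0 q * g (q, 0) + P0 (fst x) 1 q * g (q, 1))"
    using assms by (intro sum.cong refl) (simp add: step_prob_def)
  finally show ?thesis .
qed

lemma sum_successors_Suc:
  assumes "snd x = Suc k"
  shows "(\<Sum>y\<in>successors x. Pstep x y * g y)
    = (\<Sum>q\<in>UNIV. Ppos (fst x) (-1) q * g (q, k) + Ppos (fst x) 0 q * g (q, Suc k)
        + Ppos (fst x) 1 q * g (q, Suc (Suc k)))"
proof -
  have "{snd x - 1 .. snd x + 1} = {k, Suc k, Suc (Suc k)}"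
    using assms by auto
  then have "(\<Sum>y\<in>successors x. Pstep x y * g y)
      = (\<Sum>q\<in>UNIV. \<Sum>b\<in>{k, Suc k, Suc (Suc k)}. Pstep x (q, b) * g (q, b))"
    by (simp add: successors_def sum.cartesian_product')
  also have "\<dots> = (\<Sum>q\<in>UNIV. Ppos (fst x) (-1) q * g (q, k) + Ppos (fst x) 0 q * g (q, Suc k)
      + Ppos (fst x) 1 q * g (q, Suc (Suc k)))"
    using assms by (intro sum.cong refl) (simp add: step_prob_def)
  finally show ?thesis .
qed

lemma sum_step_prob: "(\<Sum>y\<in>successors x. Pstep x y) = 1"
proof (cases "snd x")
  case 0
  have "(\<Sum>y\<in>successors x. Pstep x y * 1) = (\<Sum>q\<in>UNIV. P0 (fst x) 0 q + P0 (fst x) 1 q)"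
    using sum_successors_zero[OF 0, of "\<lambda>_. 1"] by simp
  also have "\<dots> = 1"
    using pOC unfolding is_pOC_def by (simp add: sum.distrib)
  finally show ?thesis by simp
next
  case (Suc k)
  have "(\<Sum>y\<in>successors x. Pstep x y * 1)
      = (\<Sum>q\<in>UNIV. Ppos (fst x) (-1) q + Ppos (fst x) 0 q + Ppos (fst x) 1 q)"
    using sum_successors_Suc[OF Suc, of "\<lambda>_. 1"] by simp
  also have "\<dots> = 1"
    using pOC unfolding is_pOC_def by (simp add: sum.distrib add.assoc)
  finally show ?thesis by simp
qed

lemma sum_step_prob_increment:
  assumes pot: "is_potential Ppos t v" and x: "snd x = Suc k"
  shows "(\<Sum>y\<in>successors x. Pstep x y * (real (snd y) - real (snd x) + v (fst y) - v (fst x) - t)) = 0"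
proof -
  define p where "p = fst x"
  define a where "a q = Ppos p (-1) q" for q
  define b where "b q = Ppos p 0 q" for q
  define c where "c q = Ppos p 1 q" for q
  have total: "(\<Sum>q\<in>UNIV. a q) + (\<Sum>q\<in>UNIV. b q) + (\<Sum>q\<in>UNIV. c q) = 1"
    using pOC unfolding is_pOC_def a_def b_def c_def by (simp add: add.assoc)
  have drift_p: "drift Ppos p = (\<Sum>q\<in>UNIV. c q) - (\<Sum>q\<in>UNIV. a q)"
    by (simp add: drift_def a_def c_def sum_negf)
  have row_p: "trans_matrix Ppos p q = a q + b q + c q" for q
    by (simp add: trans_matrix_def a_def b_def c_def add.assoc)
  have potential_at_p: "drift Ppos p + (\<Sum>q\<in>UNIV. (a q + b q + c q) * v q) = v p + t"
    using pot unfolding is_potential_def row_p[symmetric] by blast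
  have "(\<Sum>y\<in>successors x. Pstep x y * (real (snd y) - real (snd x) + v (fst y) - v (fst x) - t))
      = (\<Sum>q\<in>UNIV. a q * (real k - real (Suc k) + v q - v p - t)
          + b q * (real (Suc k) - real (Suc k) + v q - v p - t)
          + c q * (real (Suc (Suc k)) - real (Suc k) + v q - v p - t))"
    unfolding sum_successors_Suc[OF x] by (simp add: x a_def b_def c_def p_def)
  also have "\<dots> = (\<Sum>q\<in>UNIV. (c q - a q) + (a q + b q + c q) * v q - (v p + t) * (a q + b q + c q))"
    by (intro sum.cong refl) (simp add: algebra_simps)
  also have "\<dots> = ((\<Sum>q\<in>UNIV. c q) - (\<Sum>q\<in>UNIV. a q)) + (\<Sum>q\<in>UNIV. (a q + b q + c q) * v q)
      - (v p + t) * ((\<Sum>q\<in>UNIV. a q) + (\<Sum>q\<in>UNIV. b q) + (\<Sum>q\<in>UNIV. c q))"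
    by (simp add: sum.distrib sum_subtractf sum_distrib_left[symmetric])
  also have "\<dots> = 0"
    using potential_at_p drift_p total by simp
  finally show ?thesis .
qed

abbreviation step_distr :: "'q \<times> nat \<Rightarrow> ('q \<times> nat) measure" where
  "step_distr x \<equiv> density (count_space UNIV) (\<lambda>y. ennreal (Pstep x y))"

lemma prob_space_step_distr: "prob_space (step_distr x)"
proof (rule prob_spaceI)
  have "emeasure (step_distr x) (space (step_distr x)) = (\<integral>\<^sup>+y. ennreal (Pstep x y) \<partial>count_space UNIV)"
    by (simp add: emeasure_density)
  also have "\<dots> = (\<Sum>y\<in>successors x. ennreal (Pstep x y))"
    by (rule nn_integral_count_space') (auto simp: finite_successors step_prob_eq_0)
  also have "\<dots> = ennreal (\<Sum>y\<in>successors x. Pstep x y)"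
    by (rule sum_ennreal) (simp add: step_prob_nonneg)
  finally show "emeasure (step_distr x) (space (step_distr x)) = 1"
    by (simp add: sum_step_prob)
qed

lemma integral_step_distr_increment:
  assumes "is_potential Ppos t v" and "1 \<le> snd x"
  shows "(\<integral>y. increment v t x y \<partial>step_distr x) = 0"
proof -
  obtain k where k: "snd x = Suc k"
    using assms(2) by (cases "snd x") auto
  have "(\<integral>y. increment v t x y \<partial>step_distr x) = (\<integral>y. Pstep x y * increment v t x y \<partial>count_space UNIV)"
    by (subst integral_density) (auto simp: step_prob_nonneg)
  also have "\<dots> = (\<Sum>y\<in>successors x. Pstep x y * increment v t x y)"
    by (rule integral_count_space_eq_sum[OF finite_successors]) (simp add: step_prob_eq_0)
  also have "\<dots> = (\<Sum>y\<in>successors x. Pstep x y * (real (snd y) - real (snd x) + v (fst y) - v (fst x) - t))"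
    by (intro sum.cong refl) (auto simp: increment_def successors_def k)
  also have "\<dots> = 0"
    by (rule sum_step_prob_increment[OF assms(1) k])
  finally show ?thesis .
qed

abbreviation K where "K \<equiv> run_kernel P0 Ppos x0"

abbreviation MM :: "nat \<Rightarrow> ('q \<times> nat) measure" where "MM \<equiv> \<lambda>_. count_space UNIV"

lemma run_kernel_0: "K 0 \<omega> = return (count_space UNIV) x0"
  by (simp add: run_kernel_def)

lemma run_kernel_Suc: "K (Suc j) \<omega> = step_distr (\<omega> j)"
  by (simp add: run_kernel_def)

lemma sets_run_kernel: "sets (K i \<omega>) = sets (count_space UNIV)"
  by (simp add: run_kernel_def)

lemma prob_space_run_kernel: "prob_space (K i \<omega>)"
  by (simp add: run_kernel_def prob_space_step_distr prob_space_return)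

lemma measurable_run_kernel: "K i \<in> PiM {0..<i} MM \<rightarrow>\<^sub>M subprob_algebra (count_space UNIV)"
proof (rule measurable_PiM_count_space_finite)
  show "K i \<in> PiE {0..<i} (\<lambda>_. UNIV) \<rightarrow> space (subprob_algebra (count_space UNIV))"
    using sets_run_kernel prob_space_imp_subprob_space[OF prob_space_run_kernel]
    by (auto simp: space_subprob_algebra)
qed simp

sublocale IT: Ionescu_Tulcea K MM
  unfolding Ionescu_Tulcea_def using measurable_run_kernel prob_space_run_kernel by blast

abbreviation R where "R \<equiv> run_measure P0 Ppos x0"

abbreviation C :: "nat \<Rightarrow> (nat \<Rightarrow> 'q \<times> nat) measure" where
  "C N \<equiv> IT.C 0 N (\<lambda>_. undefined)"

lemma run_measure_eq_lim: "R = IT.PF.lim"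
  by (simp add: run_measure_def)

lemma up_to_atLeastLessThan: "IT.up_to {0..<N} = N"
proof (rule antisym)
  show "IT.up_to {0..<N} \<le> N"
    by (simp add: IT.up_to_iff)
  show "N \<le> IT.up_to {0..<N}"
    using IT.up_to_less[of "{0..<N}" "N - 1"] by (cases N) auto
qed

lemma sets_run_measure: "sets R = sets (PiM UNIV MM)"
  by (simp add: run_measure_eq_lim)

lemma space_run_measure: "space R = UNIV"
  by (simp add: run_measure_eq_lim space_PiM)

lemma measurable_restrict_run_measure [measurable]:
  "(\<lambda>w. restrict w J) \<in> R \<rightarrow>\<^sub>M PiM J MM"
  by (subst measurable_cong_sets[OF sets_run_measure refl]) (simp add: measurable_restrict_subset)

lemma borel_measurable_run_measure_restrict:
  fixes f :: "(nat \<Rightarrow> 'q \<times> nat) \<Rightarrow> real"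
  shows "finite J \<Longrightarrow> (\<lambda>w. f (restrict w J)) \<in> borel_measurable R"
  by measurable

lemma prob_space_run_measure: "prob_space R"
proof (rule prob_spaceI)
  have "(\<lambda>w. restrict w {}) -` space (PiM {} MM) \<inter> space R = space R"
    by (auto simp: space_PiM)
  then have "emeasure R (space R) = emeasure (distr R (PiM {} MM) (\<lambda>w. restrict w {})) (space (PiM {} MM))"
    by (simp add: emeasure_distr[OF measurable_restrict_run_measure sets.top])
  also have "\<dots> = emeasure (IT.CI {}) (space (IT.CI {}))"
    unfolding run_measure_eq_lim by (subst IT.distr_lim) (auto simp: IT.PF.space_P space_PiM)
  also have "\<dots> = 1"
    using IT.PF.prob_space_P[of "{}"] by (simp add: prob_space.emeasure_space_1)
  finally show "emeasure R (space R) = 1" .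
qed

lemma undefined_in_space: "(\<lambda>_. undefined) \<in> space (PiM {0..<0} MM)"
  by (simp add: space_PiM)

lemma space_C: "space (C N) = PiE {0..<N} (\<lambda>_. UNIV)"
  using IT.space_C[OF undefined_in_space, of N] by (simp add: space_PiM)

lemma distr_run_measure_restrict:
  "distr R (PiM {0..<N} MM) (\<lambda>w. restrict w {0..<N}) = distr (C N) (PiM {0..<N} MM) (\<lambda>w. restrict w {0..<N})"
  unfolding run_measure_eq_lim by (simp add: IT.distr_lim IT.CI_def up_to_atLeastLessThan)

lemma measurable_restrict_C: "(\<lambda>w. restrict w {0..<N}) \<in> C N \<rightarrow>\<^sub>M PiM {0..<N} MM"
  using IT.sets_C[OF undefined_in_space, of N]
  by (subst measurable_cong_sets[OF _ refl]) (auto intro: measurable_restrict_subset)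

lemma measurable_fun_upd_run_kernel:
  "\<omega> \<in> PiE {0..<N} (\<lambda>_. UNIV) \<Longrightarrow> fun_upd \<omega> N \<in> K N \<omega> \<rightarrow>\<^sub>M PiM {0..<Suc N} MM"
  by (subst measurable_cong_sets[OF sets_run_kernel refl]) (auto simp: space_PiM PiE_iff extensional_def)

lemma measurable_eP: "IT.eP N \<in> C N \<rightarrow>\<^sub>M subprob_algebra (PiM {0..<Suc N} MM)"
  using IT.sets_C[OF undefined_in_space, of N]
  by (subst measurable_cong_sets[OF _ refl]) (auto intro: IT.measurable_eP)

lemma C_Suc: "C (Suc N) = C N \<bind> IT.eP N"
  by simp

text \<open>The law of the first \<open>N + 1\<close> configurations is that of the first \<open>N\<close> followed by
  one step of the kernel; the next two lemmas read this off for integrals and for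
  almost-sure properties.\<close>

lemma integral_run_measure_restrict:
  fixes g :: "(nat \<Rightarrow> 'q \<times> nat) \<Rightarrow> real"
  assumes bound: "\<And>\<omega>. \<bar>g \<omega>\<bar> \<le> B"
  shows "(\<integral>w. g (restrict w {0..<Suc N}) \<partial>R) = (\<integral>\<omega>. (\<integral>y. g (fun_upd \<omega> N y) \<partial>K N \<omega>) \<partial>C N)"
proof -
  have g: "g \<in> borel_measurable (PiM {0..<Suc N} MM)"
    by simp
  have "(\<integral>w. g (restrict w {0..<Suc N}) \<partial>R) = integral\<^sup>L (distr R (PiM {0..<Suc N} MM) (\<lambda>w. restrict w {0..<Suc N})) g"
    by (rule integral_distr[symmetric, OF measurable_restrict_run_measure g])
  also have "\<dots> = integral\<^sup>L (distr (C (Suc N)) (PiM {0..<Suc N} MM) (\<lambda>w. restrict w {0..<Suc N})) g"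
    by (simp only: distr_run_measure_restrict)
  also have "\<dots> = (\<integral>\<omega>. g (restrict \<omega> {0..<Suc N}) \<partial>C (Suc N))"
    by (rule integral_distr[OF measurable_restrict_C g])
  also have "\<dots> = (\<integral>\<omega>. g \<omega> \<partial>C (Suc N))"
    by (rule Bochner_Integration.integral_cong[OF refl]) (simp only: space_C PiE_restrict)
  also have "\<dots> = (\<integral>\<omega>. integral\<^sup>L (IT.eP N \<omega>) g \<partial>C N)"
    unfolding C_Suc
  proof (rule integral_bind[OF g])
    show "\<bar>g x\<bar> \<le> B" for x
      by (rule bound)
    show "IT.eP N \<in> C N \<rightarrow>\<^sub>M subprob_algebra (PiM {0..<Suc N} MM)"
      by (rule measurable_eP)
    show "finite_measure (C N)"
      using IT.prob_space_C[OF undefined_in_space] by (simp add: prob_space.finite_measure)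
    show "AE x in C N. emeasure (IT.eP N x) (space (IT.eP N x)) \<le> ennreal 1"
      using prob_space.emeasure_space_1[OF IT.prob_space_eP]
      by (intro AE_I2) (simp add: space_C space_PiM)
  qed
  also have "\<dots> = (\<integral>\<omega>. (\<integral>y. g (fun_upd \<omega> N y) \<partial>K N \<omega>) \<partial>C N)"
    unfolding IT.eP_def
    by (intro Bochner_Integration.integral_cong refl integral_distr measurable_fun_upd_run_kernel g)
      (simp add: space_C)
  finally show ?thesis .
qed

lemma AE_run_measure_restrict:
  assumes "\<And>\<omega>. \<omega> \<in> PiE {0..<N} (\<lambda>_. UNIV) \<Longrightarrow> AE y in K N \<omega>. Q (fun_upd \<omega> N y)"
  shows "AE w in R. Q (restrict w {0..<Suc N})"
proof -
  have Q: "{x \<in> space (PiM {0..<Suc N} MM). Q x} \<in> sets (PiM {0..<Suc N} MM)"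
    by (simp add: count_space_PiM_finite)
  have "AE \<omega> in C N. AE y in IT.eP N \<omega>. Q y"
  proof (rule AE_I2)
    fix \<omega> assume "\<omega> \<in> space (C N)"
    then have \<omega>: "\<omega> \<in> PiE {0..<N} (\<lambda>_. UNIV)"
      by (simp add: space_C)
    show "AE y in IT.eP N \<omega>. Q y"
      unfolding IT.eP_def AE_distr_iff[OF measurable_fun_upd_run_kernel[OF \<omega>] Q] by (rule assms[OF \<omega>])
  qed
  moreover have "Measurable.pred (PiM {0..<Suc N} MM) Q"
    by (simp add: count_space_PiM_finite)
  ultimately have "AE \<omega> in C (Suc N). Q \<omega>"
    unfolding C_Suc by (simp add: AE_bind[OF measurable_eP])
  then have "AE \<omega> in C (Suc N). Q (restrict \<omega> {0..<Suc N})"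
    by (rule AE_mp[OF _ AE_I2]) (auto simp only: space_C PiE_restrict)
  then have "AE \<omega> in distr (C (Suc N)) (PiM {0..<Suc N} MM) (\<lambda>w. restrict w {0..<Suc N}). Q \<omega>"
    unfolding AE_distr_iff[OF measurable_restrict_C Q] .
  then have "AE \<omega> in distr R (PiM {0..<Suc N} MM) (\<lambda>w. restrict w {0..<Suc N}). Q \<omega>"
    by (simp only: distr_run_measure_restrict)
  then show ?thesis
    by (rule AE_distrD[OF measurable_restrict_run_measure])
qed

lemma AE_run_initial: "AE w in R. w 0 = x0"
proof -
  have "AE w in R. (\<lambda>\<omega>. \<omega> 0 = x0) (restrict w {0..<Suc 0})"
  proof (rule AE_run_measure_restrict)
    show "AE y in K 0 \<omega>. (\<lambda>\<omega>. \<omega> 0 = x0) (fun_upd \<omega> 0 y)" for \<omega>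
      unfolding run_kernel_0 by (subst AE_return) auto
  qed
  then show ?thesis
    by simp
qed

lemma AE_run_admissible_step: "AE w in R. admissible_step (w j) (w (Suc j))"
proof -
  have "AE w in R. (\<lambda>\<omega>. admissible_step (\<omega> j) (\<omega> (Suc j))) (restrict w {0..<Suc (Suc j)})"
  proof (rule AE_run_measure_restrict)
    show "AE y in K (Suc j) \<omega>. (\<lambda>\<omega>. admissible_step (\<omega> j) (\<omega> (Suc j))) (fun_upd \<omega> (Suc j) y)" for \<omega>
      unfolding run_kernel_Suc
      by (subst AE_density) (auto simp: AE_count_space intro: admissible_step_if_step_prob_nonzero)
  qed
  then show ?thesis
    by simp
qed

lemma AE_run_counter_le: "AE w in R. \<forall>j. snd (w j) \<le> snd x0 + j"
proof -
  have "snd (w j) \<le> snd x0 + j"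
    if "w 0 = x0" and step: "\<forall>j. admissible_step (w j) (w (Suc j))" for w :: "nat \<Rightarrow> 'q \<times> nat" and j
  proof (induction j)
    case (Suc j)
    then show ?case
      using step[rule_format, of j] by (simp add: admissible_step_def)
  qed (simp add: that(1))
  moreover have "AE w in R. w 0 = x0 \<and> (\<forall>j. admissible_step (w j) (w (Suc j)))"
    using AE_run_initial AE_run_admissible_step by (simp add: AE_all_countable)
  ultimately show ?thesis
    by (auto elim: eventually_mono)
qed

lemma integral_indicator_m_increment:
  assumes pot: "is_potential Ppos t v"
  shows "(\<integral>w. indicator B (restrict w {0..n}) * m_increment v t n w \<partial>R) = 0"
proof -
  define g where "g \<omega> = indicator B (restrict \<omega> {0..n}) * m_increment v t n \<omega>"
    for \<omega> :: "nat \<Rightarrow> 'q \<times> nat"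
  have g_restrict: "g (restrict w {0..<Suc (Suc n)}) = g w" for w
  proof -
    have "{0..<Suc (Suc n)} \<inter> {0..n} = {0..n}"
      by auto
    moreover have "(\<forall>j\<le>n. 1 \<le> snd (restrict w {0..<Suc (Suc n)} j)) = (\<forall>j\<le>n. 1 \<le> snd (w j))"
      by auto
    ultimately show ?thesis
      unfolding g_def m_increment_def restrict_restrict by auto
  qed
  have g_bound: "\<bar>g \<omega>\<bar> \<le> 1 + 2 * (\<Sum>q\<in>UNIV. \<bar>v q\<bar>) + \<bar>t\<bar>" for \<omega>
    using abs_increment_le[of v t] by (auto simp: g_def m_increment_def indicator_def)
  \<comment> \<open>With the past \<open>\<omega>\<close> fixed, integrating out the last step gives the expected increment from \<open>\<omega> n\<close>.\<close>
  have step_integral: "(\<integral>y. g (fun_upd \<omega> (Suc n) y) \<partial>K (Suc n) \<omega>) = 0" for \<omega>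
  proof -
    have past: "restrict (fun_upd \<omega> (Suc n) y) {0..n} = restrict \<omega> {0..n}"
      "(\<forall>j\<le>n. 1 \<le> snd (fun_upd \<omega> (Suc n) y j)) = (\<forall>j\<le>n. 1 \<le> snd (\<omega> j))" for y
      by (auto simp: restrict_def)
    have g_upd: "g (fun_upd \<omega> (Suc n) y) = indicator B (restrict \<omega> {0..n}) *
        (if \<forall>j\<le>n. 1 \<le> snd (\<omega> j) then increment v t (\<omega> n) y else 0)" for y
      unfolding g_def m_increment_def past by auto
    show ?thesis
    proof (cases "\<forall>j\<le>n. 1 \<le> snd (\<omega> j)")
      case True
      then show ?thesis
        unfolding g_upd by (simp add: run_kernel_Suc integral_step_distr_increment[OF pot])
    next
      case False
      then show ?thesis
        unfolding g_upd if_not_P[OF False] by simp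
    qed
  qed
  have "(\<integral>w. g w \<partial>R) = (\<integral>w. g (restrict w {0..<Suc (Suc n)}) \<partial>R)"
    by (simp only: g_restrict)
  also have "\<dots> = (\<integral>\<omega>. (\<integral>y. g (fun_upd \<omega> (Suc n) y) \<partial>K (Suc n) \<omega>) \<partial>C (Suc n))"
    by (rule integral_run_measure_restrict[OF g_bound])
  also have "\<dots> = 0"
    by (simp add: step_integral)
  finally show ?thesis
    by (simp add: g_def)
qed

abbreviation F where "F \<equiv> run_filtration R"

lemma sets_run_filtration:
  "sets (F n) = {(\<lambda>w. restrict w {0..n}) -` A \<inter> space R | A. A \<in> sets (PiM {0..n} MM)}"
  unfolding run_filtration_def by (rule sets_vimage_algebra2) (auto simp: space_PiM)

lemma subalgebra_run_filtration: "subalgebra R (F n)"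
  unfolding subalgebra_def
proof
  show "sets (F n) \<subseteq> sets R"
    unfolding sets_run_filtration using measurable_sets[OF measurable_restrict_run_measure] by auto
  show "space (F n) = space R"
    by (simp add: run_filtration_def)
qed

lemma run_filtration_mono: "sets (F n) \<subseteq> sets (F (Suc n))"
proof
  fix X assume "X \<in> sets (F n)"
  then obtain A where A: "A \<in> sets (PiM {0..n} MM)" and X: "X = (\<lambda>w. restrict w {0..n}) -` A \<inter> space R"
    unfolding sets_run_filtration by auto
  define A' where "A' = (\<lambda>\<omega>. restrict \<omega> {0..n}) -` A \<inter> space (PiM {0..Suc n} MM)"
  have restrict_twice: "restrict (restrict w {0..Suc n}) {0..n} = restrict w {0..n}"
    for w :: "nat \<Rightarrow> 'q \<times> nat"
    by (auto simp: restrict_def)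
  have "A' \<in> sets (PiM {0..Suc n} MM)"
    unfolding A'_def by (rule measurable_sets[OF measurable_restrict_subset A]) auto
  moreover have "X = (\<lambda>w. restrict w {0..Suc n}) -` A' \<inter> space R"
    unfolding X A'_def by (auto simp: space_PiM restrict_twice)
  ultimately show "X \<in> sets (F (Suc n))"
    unfolding sets_run_filtration by blast
qed

lemma m_proc_measurable_run_filtration: "m_proc v t n \<in> borel_measurable (F n)"
proof -
  have "(\<lambda>w. m_proc v t n (restrict w {0..n})) \<in> borel_measurable (F n)"
    unfolding run_filtration_def
    by (rule measurable_compose[OF measurable_vimage_algebra1]) (auto simp: space_PiM)
  then show ?thesis
    by (simp add: m_proc_restrict)
qed

lemma borel_measurable_m_proc: "m_proc v t n \<in> borel_measurable R"
  using borel_measurable_run_measure_restrict[of "{0..n}" "m_proc v t n"]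
  by (simp add: m_proc_restrict)

lemma borel_measurable_m_increment: "m_increment v t n \<in> borel_measurable R"
proof -
  have "m_increment v t n = (\<lambda>w. m_increment v t n (restrict w {0..Suc n}))"
    by (auto simp: m_increment_def fun_eq_iff)
  then show ?thesis
    using borel_measurable_run_measure_restrict[of "{0..Suc n}" "m_increment v t n"] by simp
qed

lemma finite_measure_run_measure: "finite_measure R"
  using prob_space_run_measure by (rule prob_space.finite_measure)

lemma integrable_m_proc: "integrable R (m_proc v t n)"
proof (rule finite_measure.integrable_const_bound[OF finite_measure_run_measure _ borel_measurable_m_proc])
  show "AE w in R. norm (m_proc v t n w) \<le> real (snd x0) + real n + (\<Sum>q\<in>UNIV. \<bar>v q\<bar>) + real n * \<bar>t\<bar>"
    using AE_run_counter_le by (rule eventually_mono) (auto intro!: abs_m_proc_le)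
qed

lemma set_integral_m_proc_Suc:
  assumes pot: "is_potential Ppos t v" and X: "X \<in> sets (F n)"
  shows "(\<integral>w\<in>X. m_proc v t (Suc n) w \<partial>R) = (\<integral>w\<in>X. m_proc v t n w \<partial>R)"
proof -
  obtain A where "X = (\<lambda>w. restrict w {0..n}) -` A \<inter> space R"
    using X unfolding sets_run_filtration by auto
  then have ind: "indicator X w = indicator A (restrict w {0..n})" for w :: "nat \<Rightarrow> 'q \<times> nat"
    by (simp add: space_run_measure indicator_def)
  define indA where "indA w = (indicator A (restrict w {0..n}) :: real)" for w :: "nat \<Rightarrow> 'q \<times> nat"
  have indA: "indA \<in> borel_measurable R"
    unfolding indA_def by (rule borel_measurable_run_measure_restrict) simp
  have X_sets: "X \<in> sets R"
    using X subalgebra_run_filtration by (auto simp: subalgebra_def)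
  have int_m: "integrable R (\<lambda>w. indA w * m_proc v t n w)"
    using integrable_mult_indicator[OF X_sets integrable_m_proc] by (simp add: ind indA_def)
  have int_incr: "integrable R (\<lambda>w. indA w * m_increment v t n w)"
  proof (rule finite_measure.integrable_const_bound[OF finite_measure_run_measure])
    show "AE w in R. norm (indA w * m_increment v t n w) \<le> 1 + 2 * (\<Sum>q\<in>UNIV. \<bar>v q\<bar>) + \<bar>t\<bar>"
      using abs_increment_le[of v t] by (auto simp: indA_def m_increment_def indicator_def)
    show "(\<lambda>w. indA w * m_increment v t n w) \<in> borel_measurable R"
      using indA borel_measurable_m_increment by measurable
  qed
  have "(\<integral>w\<in>X. m_proc v t (Suc n) w \<partial>R) = (\<integral>w. indA w * m_proc v t n w + indA w * m_increment v t n w \<partial>R)"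
    unfolding set_lebesgue_integral_def
  proof (rule integral_cong_AE)
    show "(\<lambda>w. indicator X w *\<^sub>R m_proc v t (Suc n) w) \<in> borel_measurable R"
      using X_sets borel_measurable_m_proc by measurable
    show "(\<lambda>w. indA w * m_proc v t n w + indA w * m_increment v t n w) \<in> borel_measurable R"
      using indA borel_measurable_m_proc borel_measurable_m_increment by measurable
    show "AE w in R. indicator X w *\<^sub>R m_proc v t (Suc n) w = indA w * m_proc v t n w + indA w * m_increment v t n w"
      using AE_run_admissible_step[of n]
      by (rule eventually_mono)
        (subst m_proc_Suc_eq_add_m_increment, assumption, simp add: ind indA_def algebra_simps)
  qed
  also have "\<dots> = (\<integral>w. indA w * m_proc v t n w \<partial>R) + (\<integral>w. indA w * m_increment v t n w \<partial>R)"
    by (rule Bochner_Integration.integral_add[OF int_m int_incr])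
  also have "\<dots> = (\<integral>w\<in>X. m_proc v t n w \<partial>R)"
    by (simp add: indA_def integral_indicator_m_increment[OF pot] set_lebesgue_integral_def ind)
  finally show ?thesis .
qed

lemma martingale_m_proc:
  assumes "is_potential Ppos t v"
  shows "martingale R F (\<lambda>i. m_proc v t i)"
  unfolding martingale_def
proof (intro conjI allI)
  fix n
  interpret finite_measure_subalgebra R "F n"
    using finite_measure_run_measure subalgebra_run_filtration
    by (simp add: finite_measure_subalgebra_def finite_measure_subalgebra_axioms_def)
  show "AE w in R. real_cond_exp R (F n) (m_proc v t (Suc n)) w = m_proc v t n w"
    by (intro real_cond_exp_charact integrable_m_proc m_proc_measurable_run_filtration
        set_integral_m_proc_Suc[OF assms])
qed (auto simp: subalgebra_run_filtration run_filtration_mono m_proc_measurable_run_filtration integrable_m_proc)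

end

theorem mainTheorem10:
  fixes P0 Ppos :: "'q::finite \<Rightarrow> int \<Rightarrow> 'q \<Rightarrow> real"
    and \<alpha> v :: "'q \<Rightarrow> real"
    and r :: 'q and c :: nat
  assumes "is_pOC P0 Ppos"
    and "strongly_connected (trans_matrix Ppos)"
    and "invariant_distribution (trans_matrix Ppos) \<alpha>"
    and "is_potential Ppos (trend Ppos \<alpha>) v"
  shows "martingale (run_measure P0 Ppos (r, c))
           (run_filtration (run_measure P0 Ppos (r, c)))
           (\<lambda>i. m_proc v (trend Ppos \<alpha>) i)"
proof -
  interpret pOC_run P0 Ppos "(r, c)"
    by unfold_locales (rule assms(1))
  show ?thesis
    by (rule martingale_m_proc[OF assms(4)])
qed

end
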